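(* Let ${\mathbf{X}}\in\mathbb{R}_+^{m\times n}$, let ${\mathbf{A}}\in\mathbb{R}^{k\times m}$ satisfy ${\mathbf{A}}{\mathbf{A}}^T={\mathbf{I}}_k$, let $\lambda\in[0,1]$ and $\sigma\ge\max_{a,b}\big(({\mathbf{A}}^T{\mathbf{A}})_{ab}\big)_-$. Then for entrywise nonnegative ${\mathbf{U}}\in\mathbb{R}^{m\times r}$, ${\mathbf{V}}\in\mathbb{R}^{n\times r}$ (with denominators below entrywise positive), the objective $$\|{\mathbf{A}}({\mathbf{X}}-{\mathbf{U}}{\mathbf{V}}^T)\|_F^2+\lambda\|({\mathbf{I}}_m-{\mathbf{A}}^T{\mathbf{A}}){\mathbf{U}}{\mathbf{V}}^T\|_F^2+\sigma\|\mathbf{1}^T({\mathbf{X}}-{\mathbf{U}}{\mathbf{V}}^T)\|_2^2$$ does not increase under each of the updates $${\mathbf{U}}\leftarrow{\mathbf{U}}\circ\frac{{\mathbf{A}}^T{\mathbf{A}}{\mathbf{X}}{\mathbf{V}}+\sigma\mathbf{1}\mathbf{1}^T{\mathbf{X}}{\mathbf{V}}}{(1-\lambda){\mathbf{A}}^T{\mathbf{A}}{\mathbf{U}}{\mathbf{V}}^T{\mathbf{V}}+\sigma\mathbf{1}\mathbf{1}^T{\mathbf{U}}{\mathbf{V}}^T{\mathbf{V}}+\lambda{\mathbf{U}}{\mathbf{V}}^T{\mathbf{V}}},$$ $${\mathbf{V}}\leftarrow{\mathbf{V}}\circ\frac{{\mathbf{X}}^T{\mathbf{A}}^T{\mathbf{A}}{\mathbf{U}}+\sigma{\mathbf{X}}^T\mathbf{1}\mathbf{1}^T{\mathbf{U}}}{(1-\lambda){\mathbf{V}}{\mathbf{U}}^T{\mathbf{A}}^T{\mathbf{A}}{\mathbf{U}}+\sigma{\mathbf{V}}{\mathbf{U}}^T\mathbf{1}\mathbf{1}^T{\mathbf{U}}+\lambda{\mathbf{V}}{\mathbf{U}}^T{\mathbf{U}}},$$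 and the updated factors remain entrywise nonnegative.
   Context: $\mathbf{1}\in\mathbb{R}^m$ is the all-ones vector; $(x)_-=-\min(x,0)$; $\circ$ is entrywise product and the fraction bar is entrywise division; $\mathbb{R}_+^{m\times n}$ denotes entrywise nonnegative matrices. $\|\cdot\|_F$ is the Frobenius norm, $\|\cdot\|_2$ the Euclidean norm. *)

theory Defs
  imports "HOL-Analysis.Analysis"
begin

text \<open>Matrices are HOL-Analysis matrices: a p x q real matrix has type real^'q^'p
  (rows indexed by 'p). ** is matrix product, transpose, mat 1 the identity.\<close>

definition frob_sq :: "real^'q^'p \<Rightarrow> real" where
  "frob_sq M = (\<Sum>i\<in>UNIV. \<Sum>j\<in>UNIV. (M $ i $ j)^2)"

definition ones_mat :: "real^'q^'p" where
  "ones_mat = (\<chi> i j. 1)"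

definition nonneg_mat :: "real^'q^'p \<Rightarrow> bool" where
  "nonneg_mat M \<longleftrightarrow> (\<forall>i j. 0 \<le> M $ i $ j)"

definition pos_mat :: "real^'q^'p \<Rightarrow> bool" where
  "pos_mat M \<longleftrightarrow> (\<forall>i j. 0 < M $ i $ j)"

definition mult_update :: "real^'q^'p \<Rightarrow> real^'q^'p \<Rightarrow> real^'q^'p \<Rightarrow> real^'q^'p" where
  "mult_update U N D = (\<chi> i j. U $ i $ j * N $ i $ j / D $ i $ j)"

text \<open>The objective
  ||A(X - U V^T)||_F^2 + lambda ||(I - A^T A) U V^T||_F^2 + sigma ||1^T (X - U V^T)||_2^2.
  1^T M is the row vector of column sums of M; its squared 2-norm is the sum of
  squared column sums.\<close>
definition objective ::
  "real^'m^'k \<Rightarrow> real^'n^'m \<Rightarrow> real \<Rightarrow> real \<Rightarrow> real^'r^'m \<Rightarrow> real^'r^'n \<Rightarrow> real" where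
  "objective A X lam sig U V =
     frob_sq (A ** (X - U ** transpose V))
     + lam * frob_sq ((mat 1 - transpose A ** A) ** (U ** transpose V))
     + sig * (\<Sum>j\<in>UNIV. (\<Sum>i\<in>UNIV. (X - U ** transpose V) $ i $ j)^2)"

definition numer_U ::
  "real^'m^'k \<Rightarrow> real^'n^'m \<Rightarrow> real \<Rightarrow> real \<Rightarrow> real^'r^'m \<Rightarrow> real^'r^'n \<Rightarrow> real^'r^'m" where
  "numer_U A X lam sig U V =
     transpose A ** A ** X ** V + sig *\<^sub>R ((ones_mat :: real^'m^'m) ** X ** V)"

definition denom_U ::
  "real^'m^'k \<Rightarrow> real^'n^'m \<Rightarrow> real \<Rightarrow> real \<Rightarrow> real^'r^'m \<Rightarrow> real^'r^'n \<Rightarrow> real^'r^'m" where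
  "denom_U A X lam sig U V =
     (1 - lam) *\<^sub>R (transpose A ** A ** U ** transpose V ** V)
     + sig *\<^sub>R ((ones_mat :: real^'m^'m) ** U ** transpose V ** V)
     + lam *\<^sub>R (U ** transpose V ** V)"

definition numer_V ::
  "real^'m^'k \<Rightarrow> real^'n^'m \<Rightarrow> real \<Rightarrow> real \<Rightarrow> real^'r^'m \<Rightarrow> real^'r^'n \<Rightarrow> real^'r^'n" where
  "numer_V A X lam sig U V =
     transpose X ** transpose A ** A ** U + sig *\<^sub>R (transpose X ** (ones_mat :: real^'m^'m) ** U)"

definition denom_V ::
  "real^'m^'k \<Rightarrow> real^'n^'m \<Rightarrow> real \<Rightarrow> real \<Rightarrow> real^'r^'m \<Rightarrow> real^'r^'n \<Rightarrow> real^'r^'n" where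
  "denom_V A X lam sig U V =
     (1 - lam) *\<^sub>R (V ** transpose U ** transpose A ** A ** U)
     + sig *\<^sub>R (V ** transpose U ** (ones_mat :: real^'m^'m) ** U)
     + lam *\<^sub>R (V ** transpose U ** U)"

end

theory Submission
  imports Defs
begin

text \<open>With P = A^T A, the objective is a quadratic function of W = U V^T whose
  (half) Hessian H = (1 - \<lambda>) P + \<sigma> 1 1^T + \<lambda> I is entrywise nonnegative exactly because
  \<sigma> dominates the negative entries of P. With V fixed, replacing U by U + \<Delta> changes the
  objective by 2\<langle>\<Delta>, D - N\<rangle> + \<langle>\<Delta>, H \<Delta> V^T V\<rangle>, where D = H U V^T V is the
  denominator and N the numerator of the update. For the multiplicative step
  \<Delta> = U \<circ> N / D - U the linear term is -\<Sigma> D \<Delta>^2 / U, and the Lee-Seung argument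
  (AM-GM on every pair of entries, weighted by the symmetric nonnegative kernel
  H \<otimes> V^T V) bounds the quadratic term by +\<Sigma> D \<Delta>^2 / U. The V-update is the same with
  the roles of the factors exchanged. Nonnegativity is preserved since the numerators are
  products of nonnegative matrices, P + \<sigma> 1 1^T being nonnegative for the same reason as H.\<close>

lemma matrix_add_rdistrib: "((A::real^'n^'m) + B) ** (C::real^'p^'n) = A ** C + B ** C"
  by (vector matrix_matrix_mult_def sum.distrib[symmetric] field_simps)

lemma matrix_diff_rdistrib: "((A::real^'n^'m) - B) ** (C::real^'p^'n) = A ** C - B ** C"
  by (vector matrix_matrix_mult_def sum_subtractf[symmetric] field_simps)

lemma matrix_diff_ldistrib: "(A::real^'n^'m) ** ((B::real^'p^'n) - C) = A ** B - A ** C"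
  by (vector matrix_matrix_mult_def sum_subtractf[symmetric] field_simps)

lemmas matrix_ring_simps = matrix_add_rdistrib matrix_add_ldistrib matrix_diff_rdistrib
  matrix_diff_ldistrib scalar_matrix_assoc[symmetric] matrix_scalar_ac matrix_mul_assoc
  matrix_mul_lid matrix_mul_rid

lemma transpose_add: "transpose ((A::real^'n^'m) + B) = transpose A + transpose B"
  by (vector transpose_def)

lemma transpose_diff: "transpose ((A::real^'n^'m) - B) = transpose A - transpose B"
  by (vector transpose_def)

lemma transpose_ones_mat: "transpose (ones_mat :: real^'m^'m) = ones_mat"
  by (vector transpose_def ones_mat_def)

lemma sum_reverse3:
  "(\<Sum>a\<in>A. \<Sum>b\<in>B. \<Sum>c\<in>C. f a b c) = (\<Sum>c\<in>C. \<Sum>b\<in>B. \<Sum>a\<in>A. f a b c)"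
proof -
  have "(\<Sum>a\<in>A. \<Sum>b\<in>B. \<Sum>c\<in>C. f a b c) = (\<Sum>a\<in>A. \<Sum>c\<in>C. \<Sum>b\<in>B. f a b c)"
    by (intro sum.cong refl sum.swap)
  also have "\<dots> = (\<Sum>c\<in>C. \<Sum>a\<in>A. \<Sum>b\<in>B. f a b c)"
    by (rule sum.swap)
  also have "\<dots> = (\<Sum>c\<in>C. \<Sum>b\<in>B. \<Sum>a\<in>A. f a b c)"
    by (intro sum.cong refl sum.swap)
  finally show ?thesis .
qed

lemma inner_matrix_mul_left:
  "inner ((A::real^'n^'m) ** (B::real^'p^'n)) C = inner B (transpose A ** C)"
  unfolding inner_vec_def matrix_matrix_mult_def transpose_def
  by (simp add: sum_distrib_left sum_distrib_right ac_simps) (rule sum_reverse3)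

lemma inner_matrix_mul_right:
  "inner ((A::real^'n^'m) ** (B::real^'p^'n)) C = inner A (C ** transpose B)"
  unfolding inner_vec_def matrix_matrix_mult_def transpose_def
  by (simp add: sum_distrib_left sum_distrib_right ac_simps) (intro sum.cong refl sum.swap)

lemma inner_transpose: "inner (transpose (A::real^'n^'m)) B = inner A (transpose B)"
  unfolding inner_vec_def transpose_def by simp (rule sum.swap)

lemma frob_sq_eq_inner: "frob_sq M = inner M M"
  by (simp add: frob_sq_def inner_vec_def power2_eq_square)

lemma sum_sq_column_sums_eq_inner:
  "(\<Sum>j\<in>UNIV. (\<Sum>i\<in>UNIV. (E::real^'n^'m) $ i $ j)^2) = inner E ((ones_mat :: real^'m^'m) ** E)"
proof -
  have "inner E ((ones_mat :: real^'m^'m) ** E) = (\<Sum>i\<in>UNIV. \<Sum>j\<in>UNIV. E$i$j * (\<Sum>k\<in>UNIV. E$k$j))"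
    by (simp add: inner_vec_def matrix_matrix_mult_def ones_mat_def)
  also have "\<dots> = (\<Sum>j\<in>UNIV. \<Sum>i\<in>UNIV. E$i$j * (\<Sum>k\<in>UNIV. E$k$j))"
    by (rule sum.swap)
  finally show ?thesis
    by (simp add: power2_eq_square sum_distrib_right)
qed

lemma inner_symmetric_matrix_commute:
  fixes S :: "real^'m^'m" and Y Z :: "real^'n^'m"
  assumes "transpose S = S"
  shows "inner Y (S ** Z) = inner Z (S ** Y)"
  by (metis inner_matrix_mul_left assms inner_commute)

lemma quadratic_form_add:
  fixes S :: "real^'m^'m" and Y Z :: "real^'n^'m"
  assumes "transpose S = S"
  shows "inner (Y + Z) (S ** (Y + Z)) = inner Y (S ** Y) + 2 * inner Z (S ** Y) + inner Z (S ** Z)"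
  using inner_symmetric_matrix_commute[OF assms, of Y Z]
  by (simp add: matrix_add_ldistrib inner_add_left inner_add_right)

lemma quadratic_form_diff:
  fixes S :: "real^'m^'m" and Y Z :: "real^'n^'m"
  assumes "transpose S = S"
  shows "inner (Y - Z) (S ** (Y - Z)) = inner Y (S ** Y) - 2 * inner Z (S ** Y) + inner Z (S ** Z)"
  using inner_symmetric_matrix_commute[OF assms, of Y Z]
  by (simp add: matrix_diff_ldistrib inner_diff_left inner_diff_right)

lemma nonneg_mat_mul: "nonneg_mat (A::real^'n^'m) \<Longrightarrow> nonneg_mat (B::real^'p^'n) \<Longrightarrow> nonneg_mat (A ** B)"
  by (auto simp: nonneg_mat_def matrix_matrix_mult_def intro!: sum_nonneg)

lemma nonneg_mat_one: "nonneg_mat (mat 1 :: real^'n^'n)"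
  by (simp add: nonneg_mat_def mat_def)

lemma nonneg_mat_transpose: "nonneg_mat M \<Longrightarrow> nonneg_mat (transpose M)"
  by (simp add: nonneg_mat_def transpose_def)

lemma nonneg_mat_mult_update:
  "nonneg_mat U \<Longrightarrow> nonneg_mat N \<Longrightarrow> pos_mat D \<Longrightarrow> nonneg_mat (mult_update U N D)"
  by (auto simp: nonneg_mat_def pos_mat_def mult_update_def less_imp_le)

lemma two_mul_le_ratio_weighted_squares:
  fixes x y u v :: real
  assumes "0 \<le> u" "0 \<le> v" "u = 0 \<Longrightarrow> x = 0" "v = 0 \<Longrightarrow> y = 0"
  shows "2 * (x * y) \<le> v * (x^2 / u) + u * (y^2 / v)"
proof (cases "u > 0 \<and> v > 0")
  case True
  have "0 \<le> (v * x - u * y)^2 / (u * v)" using True by simp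
  also have "\<dots> = v * (x^2 / u) + u * (y^2 / v) - 2 * (x * y)"
    using True by (simp add: field_simps power2_eq_square)
  finally show ?thesis by simp
next
  case False
  then show ?thesis using assms by (auto intro: add_nonneg_nonneg mult_nonneg_nonneg)
qed

lemma symmetric_kernel_quadratic_bound:
  fixes K :: "'i \<Rightarrow> 'i \<Rightarrow> real" and u d :: "'i \<Rightarrow> real"
  assumes K_sym: "\<And>x y. K x y = K y x" and "\<And>x y. 0 \<le> K x y"
    and "\<And>x. 0 \<le> u x" and "\<And>x. u x = 0 \<Longrightarrow> d x = 0"
  shows "(\<Sum>x\<in>I. \<Sum>y\<in>I. K x y * (d x * d y)) \<le> (\<Sum>x\<in>I. (\<Sum>y\<in>I. K x y * u y) * (d x^2 / u x))"
proof -
  define h where "h x y = K x y * u y * (d x^2 / u x)" for x y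
  have "(\<Sum>x\<in>I. \<Sum>y\<in>I. K x y * (d x * d y)) \<le> (\<Sum>x\<in>I. \<Sum>y\<in>I. (h x y + h y x) / 2)"
  proof (intro sum_mono)
    fix x y
    have "K x y * (2 * (d x * d y)) \<le> K x y * (u y * (d x^2 / u x) + u x * (d y^2 / u y))"
      using assms by (intro mult_left_mono two_mul_le_ratio_weighted_squares) auto
    then show "K x y * (d x * d y) \<le> (h x y + h y x) / 2"
      by (simp add: h_def K_sym[of y x] algebra_simps)
  qed
  also have "\<dots> = ((\<Sum>x\<in>I. \<Sum>y\<in>I. h x y) + (\<Sum>x\<in>I. \<Sum>y\<in>I. h y x)) / 2"
    by (simp add: sum.distrib sum_divide_distrib[symmetric])
  also have "\<dots> = (\<Sum>x\<in>I. \<Sum>y\<in>I. h x y)"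
    by (subst (2) sum.swap) simp
  also have "\<dots> = (\<Sum>x\<in>I. (\<Sum>y\<in>I. K x y * u y) * (d x^2 / u x))"
    by (simp only: h_def sum_distrib_right)
  finally show ?thesis .
qed

lemma mult_update_linear_term:
  fixes u n D :: real
  assumes "D \<noteq> 0"
  shows "(u * n / D - u) * (D - n) = - (D * ((u * n / D - u)^2 / u))"
  using assms by (cases "u = 0") (simp_all add: field_simps power2_eq_square)

lemma sum_UNIV_prod:
  "(\<Sum>z\<in>UNIV. f z) = (\<Sum>a\<in>UNIV. \<Sum>b\<in>UNIV. f (a, b))"
  by (simp add: sum.cartesian_product)

lemma mult_update_descent:
  fixes Q :: "real^'p^'p" and G :: "real^'r^'r" and U N :: "real^'r^'p"
  assumes Q_sym: "transpose Q = Q" and G_sym: "transpose G = G"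
    and Q_nonneg: "nonneg_mat Q" and G_nonneg: "nonneg_mat G" and U_nonneg: "nonneg_mat U"
    and D_pos: "pos_mat (Q ** U ** G)"
  shows "2 * inner (mult_update U N (Q ** U ** G) - U) (Q ** U ** G - N)
         + inner (mult_update U N (Q ** U ** G) - U) (Q ** (mult_update U N (Q ** U ** G) - U) ** G) \<le> 0"
proof -
  define D where "D = Q ** U ** G"
  define \<Delta> where "\<Delta> = mult_update U N D - U"
  \<comment> \<open>Where U vanishes so does \<Delta>, and t is 0 by the convention x / 0 = 0.\<close>
  define t where "t a p = (\<Delta>$a$p)^2 / U$a$p" for a p
  define K where "K x y = Q $ fst x $ fst y * G $ snd y $ snd x" for x y :: "'p \<times> 'r"
  have D_entry: "D$a$p = (\<Sum>y\<in>UNIV. K (a, p) y * U $ fst y $ snd y)" for a p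
    unfolding sum_UNIV_prod
    by (simp add: D_def K_def matrix_matrix_mult_def sum_distrib_left sum_distrib_right ac_simps)
      (rule sum.swap)
  have quad_entry: "inner \<Delta> (Q ** \<Delta> ** G)
      = (\<Sum>x\<in>UNIV. \<Sum>y\<in>UNIV. K x y * (\<Delta> $ fst x $ snd x * \<Delta> $ fst y $ snd y))"
    unfolding sum_UNIV_prod
    by (simp add: K_def inner_vec_def matrix_matrix_mult_def sum_distrib_left sum_distrib_right ac_simps)
      (intro sum.cong refl sum.swap)
  have "inner \<Delta> (Q ** \<Delta> ** G)
      \<le> (\<Sum>x\<in>UNIV. (\<Sum>y\<in>UNIV. K x y * U $ fst y $ snd y) * t (fst x) (snd x))"
    unfolding quad_entry t_def
    by (rule symmetric_kernel_quadratic_bound)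
      (use Q_sym G_sym Q_nonneg G_nonneg U_nonneg in
        \<open>auto simp: K_def nonneg_mat_def \<Delta>_def mult_update_def transpose_def vec_eq_iff\<close>)
  also have "\<dots> = (\<Sum>a\<in>UNIV. \<Sum>p\<in>UNIV. D$a$p * t a p)"
    by (simp add: sum_UNIV_prod D_entry)
  finally have quadratic: "inner \<Delta> (Q ** \<Delta> ** G) \<le> (\<Sum>a\<in>UNIV. \<Sum>p\<in>UNIV. D$a$p * t a p)" .
  have D_entry_pos: "0 < D$a$p" for a p
    using D_pos by (simp add: D_def pos_mat_def)
  have linear: "inner \<Delta> (D - N) = - (\<Sum>a\<in>UNIV. \<Sum>p\<in>UNIV. D$a$p * t a p)"
    using mult_update_linear_term D_entry_pos
    by (simp add: inner_vec_def \<Delta>_def t_def mult_update_def sum_negf less_imp_neq[symmetric])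
  have "0 \<le> (\<Sum>a\<in>UNIV. \<Sum>p\<in>UNIV. D$a$p * t a p)"
    using D_entry_pos U_nonneg by (intro sum_nonneg) (auto simp: t_def nonneg_mat_def less_imp_le)
  with quadratic linear show ?thesis
    by (simp add: D_def \<Delta>_def)
qed

definition quad_objective :: "real^'m^'m \<Rightarrow> real \<Rightarrow> real \<Rightarrow> real^'n^'m \<Rightarrow> real^'n^'m \<Rightarrow> real" where
  "quad_objective P lam sig X W =
     inner (X - W) (P ** (X - W)) + lam * inner W ((mat 1 - P) ** W)
     + sig * inner (X - W) ((ones_mat :: real^'m^'m) ** (X - W))"

definition quad_objective_grad ::
  "real^'m^'m \<Rightarrow> real \<Rightarrow> real \<Rightarrow> real^'n^'m \<Rightarrow> real^'n^'m \<Rightarrow> real^'n^'m" where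
  "quad_objective_grad P lam sig X W =
     lam *\<^sub>R ((mat 1 - P) ** W) - P ** (X - W) - sig *\<^sub>R ((ones_mat :: real^'m^'m) ** (X - W))"

definition quad_objective_hess :: "real^'m^'m \<Rightarrow> real \<Rightarrow> real \<Rightarrow> real^'m^'m" where
  "quad_objective_hess P lam sig = (1 - lam) *\<^sub>R P + sig *\<^sub>R ones_mat + lam *\<^sub>R mat 1"

lemma objective_eq_quad_objective:
  fixes A :: "real^'m^'k" and X :: "real^'n^'m"
  assumes "A ** transpose A = mat 1"
  shows "objective A X lam sig U V = quad_objective (transpose A ** A) lam sig X (U ** transpose V)"
proof -
  define P where "P = transpose A ** A"
  have P_sym: "transpose P = P"
    by (simp add: P_def matrix_transpose_mul)
  have "P ** P = transpose A ** (A ** transpose A) ** A"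
    by (simp add: P_def matrix_mul_assoc)
  then have P_idem: "P ** P = P"
    by (simp add: assms P_def)
  define M where "M = mat 1 - P"
  have M_sym: "transpose M = M" and M_idem: "M ** M = M"
    by (simp_all add: M_def transpose_diff P_sym matrix_diff_ldistrib matrix_diff_rdistrib P_idem)
  have "inner (M ** W) (M ** W) = inner W (M ** W)" for W :: "real^'n^'m"
    by (simp add: inner_matrix_mul_left M_sym matrix_mul_assoc M_idem)
  moreover have "inner (A ** E) (A ** E) = inner E (P ** E)" for E :: "real^'n^'m"
    by (simp add: inner_matrix_mul_left P_def matrix_mul_assoc)
  ultimately show ?thesis
    unfolding objective_def frob_sq_eq_inner sum_sq_column_sums_eq_inner
    by (simp add: quad_objective_def flip: P_def M_def)
qed

lemma quad_objective_add:
  fixes P :: "real^'m^'m" and X W D :: "real^'n^'m"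
  assumes P_sym: "transpose P = P"
  shows "quad_objective P lam sig X (W + D)
    = quad_objective P lam sig X W + 2 * inner D (quad_objective_grad P lam sig X W)
      + inner D (quad_objective_hess P lam sig ** D)"
proof -
  define J where "J = (ones_mat :: real^'m^'m)"
  have M_sym: "transpose (mat 1 - P) = mat 1 - P"
    by (simp add: transpose_diff P_sym)
  have residual: "X - (W + D) = (X - W) - D"
    by simp
  have hess: "inner D (quad_objective_hess P lam sig ** D)
      = (1 - lam) * inner D (P ** D) + sig * inner D (J ** D) + lam * inner D D"
    by (simp add: quad_objective_hess_def J_def matrix_ring_simps inner_add_right)
  have complement: "inner D ((mat 1 - P) ** D) = inner D D - inner D (P ** D)"
    by (simp add: matrix_diff_rdistrib inner_diff_right)
  show ?thesis
    unfolding quad_objective_def quad_objective_grad_def residual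
      quadratic_form_add[OF M_sym] quadratic_form_diff[OF P_sym]
      quadratic_form_diff[OF transpose_ones_mat]
    by (simp add: hess complement inner_diff_right J_def algebra_simps)
qed

lemma nonneg_mat_quad_objective_hess:
  assumes lam: "0 \<le> lam" "lam \<le> 1" and sig: "\<forall>a b. max 0 (- P $ a $ b) \<le> sig"
  shows "nonneg_mat (quad_objective_hess P lam sig)"
  unfolding nonneg_mat_def
proof (intro allI)
  fix a b
  have "(1 - lam) * (- P $ a $ b) \<le> (1 - lam) * max 0 (- P $ a $ b)"
    using lam by (intro mult_left_mono) auto
  also have "\<dots> \<le> max 0 (- P $ a $ b)"
    using lam by (intro mult_left_le_one_le) auto
  also have "\<dots> \<le> sig"
    using sig by blast
  finally have "0 \<le> (1 - lam) * P $ a $ b + sig"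
    by simp
  then show "0 \<le> quad_objective_hess P lam sig $ a $ b"
    using lam by (simp add: quad_objective_hess_def ones_mat_def mat_def)
qed

lemma nonneg_mat_add_scaled_ones:
  assumes "\<forall>a b. max 0 (- P $ a $ b) \<le> sig"
  shows "nonneg_mat (P + sig *\<^sub>R (ones_mat :: real^'m^'m))"
  unfolding nonneg_mat_def
proof (intro allI)
  fix i j
  have "- P $ i $ j \<le> sig"
    using assms by (metis max.bounded_iff)
  then show "0 \<le> (P + sig *\<^sub>R (ones_mat :: real^'m^'m)) $ i $ j"
    by (simp add: ones_mat_def)
qed

lemma transpose_quad_objective_hess:
  "transpose P = P \<Longrightarrow> transpose (quad_objective_hess P lam sig) = quad_objective_hess P lam sig"
  by (simp add: quad_objective_hess_def transpose_add transpose_scalar transpose_ones_mat)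

lemma numer_U_eq: "numer_U A X lam sig U V = (transpose A ** A + sig *\<^sub>R ones_mat) ** X ** V"
  by (simp add: numer_U_def matrix_ring_simps)

lemma denom_U_eq:
  "denom_U A X lam sig U V = quad_objective_hess (transpose A ** A) lam sig ** U ** (transpose V ** V)"
  by (simp add: denom_U_def quad_objective_hess_def matrix_ring_simps)

lemma quad_objective_grad_mul_right:
  "quad_objective_grad (transpose A ** A) lam sig X (U ** transpose V) ** V
     = denom_U A X lam sig U V - numer_U A X lam sig U V"
  by (simp add: quad_objective_grad_def denom_U_def numer_U_def matrix_ring_simps algebra_simps)

lemma numer_V_eq: "numer_V A X lam sig U V = transpose X ** (transpose A ** A + sig *\<^sub>R ones_mat) ** U"
  by (simp add: numer_V_def matrix_ring_simps)

lemma denom_V_eq: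
  "denom_V A X lam sig U V = V ** (transpose U ** quad_objective_hess (transpose A ** A) lam sig ** U)"
  by (simp add: denom_V_def quad_objective_hess_def matrix_ring_simps)

lemma transpose_quad_objective_grad_mul_left:
  "transpose (quad_objective_grad (transpose A ** A) lam sig X (U ** transpose V)) ** U
     = denom_V A X lam sig U V - numer_V A X lam sig U V"
  by (simp add: quad_objective_grad_def denom_V_def numer_V_def matrix_ring_simps algebra_simps
      transpose_add transpose_diff transpose_scalar matrix_transpose_mul transpose_ones_mat)

lemma objective_U_update_le:
  fixes X :: "real^'n^'m" and A :: "real^'m^'k" and U :: "real^'r^'m" and V :: "real^'r^'n"
  assumes A_orth: "A ** transpose A = mat 1"
    and lam: "0 \<le> lam" "lam \<le> 1"
    and sig: "\<forall>a b. max 0 (- ((transpose A ** A) $ a $ b)) \<le> sig"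
    and U_nonneg: "nonneg_mat U" and V_nonneg: "nonneg_mat V"
    and D_pos: "pos_mat (denom_U A X lam sig U V)"
  shows "objective A X lam sig (mult_update U (numer_U A X lam sig U V) (denom_U A X lam sig U V)) V
         \<le> objective A X lam sig U V"
proof -
  define P where "P = transpose A ** A"
  define H where "H = quad_objective_hess P lam sig"
  define N where "N = numer_U A X lam sig U V"
  define D where "D = denom_U A X lam sig U V"
  define \<Delta> where "\<Delta> = mult_update U N D - U"
  have P_sym: "transpose P = P"
    by (simp add: P_def matrix_transpose_mul)
  have D_eq: "D = H ** U ** (transpose V ** V)"
    by (simp add: D_def H_def P_def denom_U_eq)
  have "objective A X lam sig (mult_update U N D) V
      = quad_objective P lam sig X (U ** transpose V + \<Delta> ** transpose V)"
    by (simp add: objective_eq_quad_objective[OF A_orth] P_def \<Delta>_def matrix_diff_rdistrib)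
  also have "\<dots> = objective A X lam sig U V
      + (2 * inner \<Delta> (D - N) + inner \<Delta> (H ** \<Delta> ** (transpose V ** V)))"
    unfolding quad_objective_add[OF P_sym]
    by (simp add: objective_eq_quad_objective[OF A_orth] P_def H_def
        D_def N_def inner_matrix_mul_right quad_objective_grad_mul_right matrix_mul_assoc)
  also have "\<dots> \<le> objective A X lam sig U V"
  proof -
    have "2 * inner \<Delta> (D - N) + inner \<Delta> (H ** \<Delta> ** (transpose V ** V)) \<le> 0"
      unfolding \<Delta>_def D_eq
    proof (rule mult_update_descent)
      show "transpose H = H" "nonneg_mat H"
        using transpose_quad_objective_hess[OF P_sym] nonneg_mat_quad_objective_hess[OF lam sig]
        by (simp_all add: H_def P_def)
      show "pos_mat (H ** U ** (transpose V ** V))"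
        using D_pos D_eq D_def by simp
    qed (simp_all add: matrix_transpose_mul nonneg_mat_mul nonneg_mat_transpose U_nonneg V_nonneg)
    then show ?thesis
      by simp
  qed
  finally show ?thesis
    by (simp add: N_def D_def)
qed

lemma objective_V_update_le:
  fixes X :: "real^'n^'m" and A :: "real^'m^'k" and U :: "real^'r^'m" and V :: "real^'r^'n"
  assumes A_orth: "A ** transpose A = mat 1"
    and lam: "0 \<le> lam" "lam \<le> 1"
    and sig: "\<forall>a b. max 0 (- ((transpose A ** A) $ a $ b)) \<le> sig"
    and U_nonneg: "nonneg_mat U" and V_nonneg: "nonneg_mat V"
    and D_pos: "pos_mat (denom_V A X lam sig U V)"
  shows "objective A X lam sig U (mult_update V (numer_V A X lam sig U V) (denom_V A X lam sig U V))
         \<le> objective A X lam sig U V"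
proof -
  define P where "P = transpose A ** A"
  define H where "H = quad_objective_hess P lam sig"
  define R where "R = transpose U ** H ** U"
  define N where "N = numer_V A X lam sig U V"
  define D where "D = denom_V A X lam sig U V"
  define \<Delta> where "\<Delta> = mult_update V N D - V"
  have P_sym: "transpose P = P"
    by (simp add: P_def matrix_transpose_mul)
  have H_sym: "transpose H = H"
    by (simp add: H_def transpose_quad_objective_hess[OF P_sym])
  have D_eq: "D = mat 1 ** V ** R"
    by (simp add: D_def R_def H_def P_def denom_V_eq)
  have "objective A X lam sig U (mult_update V N D)
      = quad_objective P lam sig X (U ** transpose V + U ** transpose \<Delta>)"
    by (simp add: objective_eq_quad_objective[OF A_orth] P_def \<Delta>_def transpose_diff matrix_diff_ldistrib)
  also have "\<dots> = objective A X lam sig U V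
      + (2 * inner \<Delta> (D - N) + inner \<Delta> (mat 1 ** \<Delta> ** R))"
    unfolding quad_objective_add[OF P_sym]
    by (simp add: objective_eq_quad_objective[OF A_orth] P_def H_def R_def
        D_def N_def inner_matrix_mul_left inner_transpose matrix_transpose_mul H_sym[unfolded H_def P_def]
        transpose_quad_objective_grad_mul_left matrix_mul_assoc)
  also have "\<dots> \<le> objective A X lam sig U V"
  proof -
    have "2 * inner \<Delta> (D - N) + inner \<Delta> (mat 1 ** \<Delta> ** R) \<le> 0"
      unfolding \<Delta>_def D_eq
    proof (rule mult_update_descent)
      show "transpose R = R"
        by (simp add: R_def matrix_transpose_mul H_sym matrix_mul_assoc)
      show "nonneg_mat R"
        using nonneg_mat_quad_objective_hess[OF lam sig] U_nonneg
        by (simp add: R_def H_def P_def nonneg_mat_mul nonneg_mat_transpose)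
      show "pos_mat (mat 1 ** V ** R)"
        using D_pos D_eq D_def by simp
    qed (simp_all add: nonneg_mat_one V_nonneg)
    then show ?thesis
      by simp
  qed
  finally show ?thesis
    by (simp add: N_def D_def)
qed

theorem mainTheorem9:
  fixes X :: "real^'n^'m" and A :: "real^'m^'k" and U :: "real^'r^'m" and V :: "real^'r^'n"
    and lam sig :: real
  assumes X_nonneg: "nonneg_mat X"
    and A_orth: "A ** transpose A = mat 1"
    and lam: "0 \<le> lam" "lam \<le> 1"
    and sig: "\<forall>a b. max 0 (- ((transpose A ** A) $ a $ b)) \<le> sig"
    and U_nonneg: "nonneg_mat U" and V_nonneg: "nonneg_mat V"
    and DU_pos: "pos_mat (denom_U A X lam sig U V)"
    and DV_pos: "pos_mat (denom_V A X lam sig U V)"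
  shows "objective A X lam sig
           (mult_update U (numer_U A X lam sig U V) (denom_U A X lam sig U V)) V
           \<le> objective A X lam sig U V
       \<and> nonneg_mat (mult_update U (numer_U A X lam sig U V) (denom_U A X lam sig U V))
       \<and> objective A X lam sig
           U (mult_update V (numer_V A X lam sig U V) (denom_V A X lam sig U V))
           \<le> objective A X lam sig U V
       \<and> nonneg_mat (mult_update V (numer_V A X lam sig U V) (denom_V A X lam sig U V))"
proof (intro conjI)
  have K_nonneg: "nonneg_mat (transpose A ** A + sig *\<^sub>R ones_mat)"
    using sig by (rule nonneg_mat_add_scaled_ones)
  show "nonneg_mat (mult_update U (numer_U A X lam sig U V) (denom_U A X lam sig U V))"
    using U_nonneg DU_pos K_nonneg X_nonneg V_nonneg
    by (simp add: nonneg_mat_mult_update numer_U_eq nonneg_mat_mul)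
  show "nonneg_mat (mult_update V (numer_V A X lam sig U V) (denom_V A X lam sig U V))"
    using V_nonneg DV_pos K_nonneg X_nonneg U_nonneg
    by (simp add: nonneg_mat_mult_update numer_V_eq nonneg_mat_mul nonneg_mat_transpose)
qed (intro objective_U_update_le objective_V_update_le assms)+

end
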